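(* Let $S$ be a finite $p$-group of nilpotency class two, let $T\trianglelefteq S$ with $T=T_1\times\cdots\times T_n$, where the $T_i$ are pairwise isomorphic groups of nilpotency class two. Suppose $s\in S\setminus T$ permutes the set $\{T_1,\dots,T_n\}$ by conjugation. Then $s$ normalizes each $T_i$. *)

theory Defs
  imports "HOL-Algebra.Algebra"
begin

definition grp_commutator :: "('a, 'b) monoid_scheme \<Rightarrow> 'a \<Rightarrow> 'a \<Rightarrow> 'a" where
  "grp_commutator G x g = inv\<^bsub>G\<^esub> x \<otimes>\<^bsub>G\<^esub> inv\<^bsub>G\<^esub> g \<otimes>\<^bsub>G\<^esub> x \<otimes>\<^bsub>G\<^esub> g"

(* lower central series: gamma_1 = G (index 0 here), gamma_{k+1} = [gamma_k, G] *)
primrec lower_central :: "('a, 'b) monoid_scheme \<Rightarrow> nat \<Rightarrow> 'a set" where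
  "lower_central G 0 = carrier G"
| "lower_central G (Suc k) =
     generate G {grp_commutator G x g | x g. x \<in> lower_central G k \<and> g \<in> carrier G}"

definition nilpotency_class_two :: "('a, 'b) monoid_scheme \<Rightarrow> bool" where
  "nilpotency_class_two G \<longleftrightarrow> group G \<and>
     lower_central G 2 = {\<one>\<^bsub>G\<^esub>} \<and> lower_central G 1 \<noteq> {\<one>\<^bsub>G\<^esub>}"

definition finite_p_group :: "('a, 'b) monoid_scheme \<Rightarrow> nat \<Rightarrow> bool" where
  "finite_p_group G p \<longleftrightarrow> group G \<and> Factorial_Ring.prime p \<and> finite (carrier G) \<and>
     (\<exists>k. card (carrier G) = p ^ k)"

primrec iprod :: "('a, 'b) monoid_scheme \<Rightarrow> (nat \<Rightarrow> 'a) \<Rightarrow> nat \<Rightarrow> 'a" where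
  "iprod G f 0 = \<one>\<^bsub>G\<^esub>"
| "iprod G f (Suc n) = iprod G f n \<otimes>\<^bsub>G\<^esub> f n"

definition internal_direct_product ::
    "('a, 'b) monoid_scheme \<Rightarrow> 'a set \<Rightarrow> (nat \<Rightarrow> 'a set) \<Rightarrow> nat \<Rightarrow> bool" where
  "internal_direct_product G T Ts n \<longleftrightarrow>
     (\<forall>i<n. subgroup (Ts i) G) \<and>
     (\<forall>i<n. \<forall>j<n. i \<noteq> j \<longrightarrow> (\<forall>x\<in>Ts i. \<forall>y\<in>Ts j. x \<otimes>\<^bsub>G\<^esub> y = y \<otimes>\<^bsub>G\<^esub> x)) \<and>
     bij_betw (\<lambda>f. iprod G f n) (Pi\<^sub>E {..<n} Ts) T"

definition conj_by :: "('a, 'b) monoid_scheme \<Rightarrow> 'a \<Rightarrow> 'a set \<Rightarrow> 'a set" where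
  "conj_by G s A = (\<lambda>x. s \<otimes>\<^bsub>G\<^esub> x \<otimes>\<^bsub>G\<^esub> inv\<^bsub>G\<^esub> s) ` A"

end

theory Submission
  imports Defs
begin

text \<open>
  Each factor \<open>T\<^sub>i\<close> has class two, so it is nonabelian and contains a nontrivial commutator
  \<open>c\<close>. Since \<open>S\<close> has class two, commutators of \<open>S\<close> are central, so conjugation by \<open>s\<close>
  fixes \<open>c\<close>. Hence the factor \<open>s T\<^sub>i s\<inverse>\<close> contains \<open>c \<noteq> 1\<close>, and as distinct factors of a
  direct product meet trivially, it must be \<open>T\<^sub>i\<close> itself.
\<close>

lemma (in group) grp_commutator_eq_one_iff:
  assumes "x \<in> carrier G" "y \<in> carrier G"
  shows "grp_commutator G x y = \<one> \<longleftrightarrow> x \<otimes> y = y \<otimes> x"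
proof -
  have "grp_commutator G x y = inv (y \<otimes> x) \<otimes> (x \<otimes> y)"
    using assms by (simp add: grp_commutator_def inv_mult_group m_assoc)
  then show ?thesis
    using assms by (metis inv_closed inv_inv l_inv m_closed local.inv_equality)
qed

lemma (in group) grp_commutator_closed:
  assumes "subgroup H G" "x \<in> H" "y \<in> H"
  shows "grp_commutator G x y \<in> H"
  using assms by (simp add: grp_commutator_def subgroup.m_closed subgroup.m_inv_closed)

lemma (in group) grp_commutator_subgroup:
  assumes "subgroup H G" "x \<in> H" "y \<in> H"
  shows "grp_commutator (G\<lparr>carrier := H\<rparr>) x y = grp_commutator G x y"
  using assms by (simp add: grp_commutator_def)

lemma (in group) lower_central_1_nontrivial_imp_noncommuting:
  assumes "lower_central G 1 \<noteq> {\<one>}"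
  obtains x y where "x \<in> carrier G" "y \<in> carrier G" "grp_commutator G x y \<noteq> \<one>"
proof -
  have "\<exists>x\<in>carrier G. \<exists>y\<in>carrier G. grp_commutator G x y \<noteq> \<one>"
  proof (rule ccontr)
    assume "\<not> ?thesis"
    then have "{grp_commutator G x g | x g. x \<in> carrier G \<and> g \<in> carrier G} \<subseteq> {\<one>}"
      by blast
    from mono_generate[OF this] have "lower_central G 1 \<subseteq> {\<one>}"
      by (simp add: generate_one)
    moreover have "\<one> \<in> lower_central G 1"
      by (simp add: generate.one)
    ultimately show False
      using assms by blast
  qed
  then show thesis
    using that by blast
qed

lemma (in group) subgroup_noncommuting_of_lower_central_1:
  assumes "subgroup H G" "group (G\<lparr>carrier := H\<rparr>)"
    and "lower_central (G\<lparr>carrier := H\<rparr>) 1 \<noteq> {\<one>}"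
  obtains x y where "x \<in> H" "y \<in> H" "grp_commutator G x y \<noteq> \<one>"
proof -
  interpret H: group "G\<lparr>carrier := H\<rparr>"
    by (rule assms(2))
  have "lower_central (G\<lparr>carrier := H\<rparr>) 1 \<noteq> {\<one>\<^bsub>G\<lparr>carrier := H\<rparr>\<^esub>}"
    using assms(3) by simp
  then obtain x y where "x \<in> H" "y \<in> H"
    and "grp_commutator (G\<lparr>carrier := H\<rparr>) x y \<noteq> \<one>"
    by (rule H.lower_central_1_nontrivial_imp_noncommuting) simp_all
  then show thesis
    using that grp_commutator_subgroup[OF assms(1)] by simp
qed

lemma (in group) lower_central_1_central:
  assumes "lower_central G 2 = {\<one>}" "c \<in> lower_central G 1" "g \<in> carrier G"
  shows "c \<otimes> g = g \<otimes> c"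
proof -
  have "grp_commutator G c g \<in> lower_central G 2"
    using assms(2,3) by (auto simp: numeral_2_eq_2 intro: generate.incl)
  then have "grp_commutator G c g = \<one>"
    using assms(1) by simp
  moreover have "lower_central G 1 \<subseteq> carrier G"
    by (auto intro!: generate_incl simp: grp_commutator_def)
  ultimately show ?thesis
    using assms(2,3) grp_commutator_eq_one_iff by blast
qed

lemma (in group) commutator_mem_conj_by:
  assumes "lower_central G 2 = {\<one>}" "subgroup H G" "x \<in> H" "y \<in> H" "s \<in> carrier G"
  shows "grp_commutator G x y \<in> conj_by G s H"
proof -
  let ?c = "grp_commutator G x y"
  have c_H: "?c \<in> H"
    using grp_commutator_closed assms(2-4) .
  have "?c \<in> lower_central G 1"
    using assms(3,4) subgroup.subset[OF assms(2)] by (auto intro: generate.incl)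
  then have "?c \<otimes> s = s \<otimes> ?c"
    using lower_central_1_central assms(1,5) by blast
  then have "s \<otimes> ?c \<otimes> inv s = ?c"
    using c_H subgroup.subset[OF assms(2)] assms(5) by (metis inv_solve_right' m_closed subsetD)
  then show ?thesis
    unfolding conj_by_def using c_H by (metis image_eqI)
qed

lemma (in monoid) iprod_single:
  assumes "z \<in> carrier G" "f i = z" "\<And>k. k < m \<Longrightarrow> k \<noteq> i \<Longrightarrow> f k = \<one>"
  shows "iprod G f m = (if i < m then z else \<one>)"
  using assms(3)
proof (induction m)
  case 0
  then show ?case by simp
next
  case (Suc m)
  then have IH: "iprod G f m = (if i < m then z else \<one>)"
    by simp
  show ?case
    using IH Suc.prems assms(1,2) by (cases "m = i") auto
qed

lemma (in group) internal_direct_product_factors_disjoint: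
  assumes "internal_direct_product G T Ts n" "i < n" "j < n" "i \<noteq> j"
    and "z \<in> Ts i" "z \<in> Ts j"
  shows "z = \<one>"
proof -
  have sub: "\<And>k. k < n \<Longrightarrow> subgroup (Ts k) G"
    and inj: "inj_on (\<lambda>f. iprod G f n) (Pi\<^sub>E {..<n} Ts)"
    using assms(1) by (auto simp: internal_direct_product_def bij_betw_def)
  have z: "z \<in> carrier G"
    using sub[OF assms(2)] assms(5) subgroup.subset by blast
  define \<delta> where "\<delta> l = (\<lambda>k\<in>{..<n}. if k = l then z else \<one>)" for l
  have \<delta>_factor: "\<delta> l \<in> Pi\<^sub>E {..<n} Ts" if "l < n" "z \<in> Ts l" for l
    using that sub by (auto simp: \<delta>_def subgroup.one_closed)
  have \<delta>_prod: "iprod G (\<delta> l) n = z" if "l < n" for l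
    using iprod_single[OF z, of "\<delta> l" l n] that by (simp add: \<delta>_def)
  \<comment> \<open>\<open>z\<close> has one expansion supported on factor \<open>i\<close> and one on factor \<open>j\<close>\<close>
  have "\<delta> i = \<delta> j"
    using inj_onD[OF inj _ \<delta>_factor[OF assms(2,5)] \<delta>_factor[OF assms(3,6)]]
      \<delta>_prod[OF assms(2)] \<delta>_prod[OF assms(3)] by simp
  then have "\<delta> i i = \<delta> j i"
    by simp
  then show ?thesis
    using assms(2,4) by (simp add: \<delta>_def)
qed

theorem mainTheorem3:
  fixes S :: "('a, 'b) monoid_scheme" and p n :: nat
    and T :: "'a set" and Ts :: "nat \<Rightarrow> 'a set" and s :: 'a
  assumes "finite_p_group S p"
    and "nilpotency_class_two S"
    and "T \<lhd> S"
    and "internal_direct_product S T Ts n"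
    and "\<forall>i<n. \<forall>j<n. S\<lparr>carrier := Ts i\<rparr> \<cong> S\<lparr>carrier := Ts j\<rparr>"
    and "\<forall>i<n. nilpotency_class_two (S\<lparr>carrier := Ts i\<rparr>)"
    and "s \<in> carrier S - T"
    and "\<forall>i<n. \<exists>j<n. conj_by S s (Ts i) = Ts j"
  shows "\<forall>i<n. conj_by S s (Ts i) = Ts i"
proof (intro allI impI)
  fix i assume i: "i < n"
  interpret S: group S
    using assms(2) by (simp add: nilpotency_class_two_def)
  have sub: "subgroup (Ts i) S"
    using assms(4) i by (simp add: internal_direct_product_def)
  obtain j where j: "j < n" "conj_by S s (Ts i) = Ts j"
    using assms(8) i by blast
  have "group (S\<lparr>carrier := Ts i\<rparr>)" "lower_central (S\<lparr>carrier := Ts i\<rparr>) 1 \<noteq> {\<one>\<^bsub>S\<^esub>}"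
    using assms(6) i by (simp_all add: nilpotency_class_two_def)
  then obtain x y where xy: "x \<in> Ts i" "y \<in> Ts i"
    and c_nontrivial: "grp_commutator S x y \<noteq> \<one>\<^bsub>S\<^esub>"
    by (rule S.subgroup_noncommuting_of_lower_central_1[OF sub])
  have c_Ti: "grp_commutator S x y \<in> Ts i"
    using S.grp_commutator_closed[OF sub xy] .
  have "lower_central S 2 = {\<one>\<^bsub>S\<^esub>}" "s \<in> carrier S"
    using assms(2,7) by (simp_all add: nilpotency_class_two_def)
  from S.commutator_mem_conj_by[OF this(1) sub xy this(2)] have c_Tj: "grp_commutator S x y \<in> Ts j"
    using j(2) by simp
  have "j = i"
  proof (rule ccontr)
    assume "j \<noteq> i"
    from this c_Tj c_Ti have "grp_commutator S x y = \<one>\<^bsub>S\<^esub>"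
      by (rule S.internal_direct_product_factors_disjoint[OF assms(4) j(1) i])
    with c_nontrivial show False ..
  qed
  then show "conj_by S s (Ts i) = Ts i"
    using j by simp
qed

end
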